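(* Any nef-partition $\Pi(\Delta)$ of a reflexive polytope $\Delta$ has a unique decomposition into a direct sum of irreducible nef-partitions.
   Context: Let $M\cong\mathbb Z^d$, $N=\mathrm{Hom}(M,\mathbb Z)$. A $d$-dimensional lattice polytope $\Delta\subset M_{\mathbb R}$ is reflexive if $\Delta=\{x:\langle x,e_k\rangle\ge-1,\ k=1,\dots,n\}$ with $e_k\in N$ the primitive inward facet normals. A nef-partition $\Pi(\Delta)=\{\Delta_1,\dots,\Delta_r\}$ is a Minkowski decomposition $\Delta=\Delta_1+\dots+\Delta_r$ into lattice polytopes such that $-\min_{x\in\Delta_j}\langle x,e_k\rangle\in\{0,1\}$ for all $j,k$. $\Pi(\Delta)$ splits into a direct sum $\Pi(\Delta^{(1)})\oplus\dots\oplus\Pi(\Delta^{(k)})$ if there are lattice polytopes $\Delta^{(1)},\dots,\Delta^{(k)}\subset\Delta$ with $\Delta=\Delta^{(1)}+\dots+\Delta^{(k)}$, $d=\sum_i\dim\Delta^{(i)}$, and for each $i$: $0$ lies in the relative interior of $\Delta^{(i)}$, $\Delta^{(i)}$ is reflexive, and $\Pi(\Delta^{(i)})=\{\Delta_j:\Delta_j\subset\Delta^{(i)}\}$ is a nef-partition of $\Delta^{(i)}$. A nef-partition is reducible if there is a subset $\{k_1,\dots,k_s\}\subset\{1,\dots,r\}$ with $0<s<r$ such that $0$ lies in the relative interior of $\Delta_{k_1}+\dots+\Delta_{k_s}$; otherwise it is irreducible. *)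

theory Defs
  imports "HOL-Analysis.Analysis" "HOL-Library.Set_Algebras"
begin

text \<open>The lattice M = Z^d is the set of integer points of real^'d; the dual lattice N is
  identified with integer vectors via the inner product.\<close>

definition lattice_point :: "real^'d \<Rightarrow> bool" where
  "lattice_point x \<longleftrightarrow> (\<forall>i. x $ i \<in> \<int>)"

definition lattice_polytope :: "(real^'d) set \<Rightarrow> bool" where
  "lattice_polytope P \<longleftrightarrow>
     (\<exists>V. finite V \<and> V \<noteq> {} \<and> (\<forall>v\<in>V. lattice_point v) \<and> P = convex hull V)"

text \<open>Minkowski sum of a finite family of sets (empty sum = {0}).\<close>
definition msum :: "(real^'d) set set \<Rightarrow> (real^'d) set" where
  "msum S = (\<Sum>P\<in>S. P)"

text \<open>Dual of the lattice M \<inter> L for a linear subspace L, realised inside L via the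
  inner product.\<close>
definition dual_lattice :: "(real^'d) set \<Rightarrow> (real^'d) set" where
  "dual_lattice L = {e \<in> L. \<forall>m\<in>L. lattice_point m \<longrightarrow> inner m e \<in> \<int>}"

definition primitive_in :: "(real^'d) set \<Rightarrow> real^'d \<Rightarrow> bool" where
  "primitive_in L e \<longleftrightarrow> e \<in> dual_lattice L \<and> e \<noteq> 0 \<and>
     \<not> (\<exists>k::int. k \<ge> 2 \<and> (1 / real_of_int k) *\<^sub>R e \<in> dual_lattice L)"

text \<open>Primitive inward facet normals of P, taken with respect to the lattice M \<inter> span P
  (for full-dimensional P this is N = Z^d).\<close>
definition facet_normals :: "(real^'d) set \<Rightarrow> (real^'d) set" where
  "facet_normals P = {e. primitive_in (span P) e \<and>
     (\<exists>F c. F facet_of P \<and> P \<subseteq> {x. inner x e \<ge> c} \<and> F \<subseteq> {x. inner x e = c})}"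

definition reflexive :: "(real^'d) set \<Rightarrow> bool" where
  "reflexive P \<longleftrightarrow> lattice_polytope P \<and>
     P = {x \<in> span P. \<forall>e\<in>facet_normals P. inner x e \<ge> -1}"

definition nef_partition :: "(real^'d) set \<Rightarrow> (real^'d) set set \<Rightarrow> bool" where
  "nef_partition P Parts \<longleftrightarrow> finite Parts \<and> Parts \<noteq> {} \<and>
     (\<forall>D\<in>Parts. lattice_polytope D \<and> D \<noteq> {0}) \<and> P = msum Parts \<and>
     (\<forall>D\<in>Parts. \<forall>e\<in>facet_normals P. - (INF x\<in>D. inner x e) \<in> {0, 1})"

definition reducible :: "(real^'d) set set \<Rightarrow> bool" where
  "reducible Parts \<longleftrightarrow> (\<exists>T. T \<subseteq> Parts \<and> T \<noteq> {} \<and> T \<noteq> Parts \<and> 0 \<in> rel_interior (msum T))"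

definition irreducible_nef :: "(real^'d) set set \<Rightarrow> bool" where
  "irreducible_nef Parts \<longleftrightarrow> \<not> reducible Parts"

definition parts_in :: "(real^'d) set set \<Rightarrow> (real^'d) set \<Rightarrow> (real^'d) set set" where
  "parts_in Parts Q = {D \<in> Parts. D \<subseteq> Q}"

definition direct_sum_split ::
  "(real^'d) set \<Rightarrow> (real^'d) set set \<Rightarrow> (real^'d) set set \<Rightarrow> bool" where
  "direct_sum_split Delta Parts S \<longleftrightarrow> finite S \<and> S \<noteq> {} \<and>
     (\<forall>Q\<in>S. lattice_polytope Q \<and> Q \<subseteq> Delta) \<and>
     Delta = msum S \<and>
     int CARD('d) = (\<Sum>Q\<in>S. aff_dim Q) \<and>
     (\<forall>Q\<in>S. 0 \<in> rel_interior Q \<and> reflexive Q \<and> nef_partition Q (parts_in Parts Q))"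

definition irreducible_decomposition ::
  "(real^'d) set \<Rightarrow> (real^'d) set set \<Rightarrow> (real^'d) set set \<Rightarrow> bool" where
  "irreducible_decomposition Delta Parts S \<longleftrightarrow> direct_sum_split Delta Parts S \<and>
     (\<forall>Q\<in>S. irreducible_nef (parts_in Parts Q))"

end

theory Submission
  imports Defs
begin

text \<open>Write msum T for the Minkowski sum of a subfamily T of the parts and call T centred if
  0 lies in the relative interior of msum T. On every facet normal e of Delta the minima of
  \<open>\<langle>x, e\<rangle>\<close> over the parts are 0 or -1 and add up to -1. Hence each msum T is cut out by the
  facet normals of Delta, and for centred T the sums over T and over its complement lie in
  complementary linear subspaces. Consequently the centred subfamilies are closed under complement
  and intersection and form a finite Boolean algebra. The sums over its atoms are reflexive,
  carry irreducible nef-partitions and have dimensions adding up to that of Delta; conversely every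
  summand of an irreducible decomposition is the sum over a minimal centred family, i.e. over an
  atom, which gives uniqueness.\<close>

section \<open>Minkowski sums and linear functionals\<close>

definition min_inner :: "'a::real_inner set \<Rightarrow> 'a \<Rightarrow> real" where
  "min_inner A e = (INF x\<in>A. inner x e)"

lemma min_inner_attained:
  fixes A :: "'a::euclidean_space set"
  assumes "compact A" "A \<noteq> {}"
  obtains a where "a \<in> A" "min_inner A e = inner a e" "\<And>x. x \<in> A \<Longrightarrow> inner a e \<le> inner x e"
proof -
  have "continuous_on A (\<lambda>x. inner x e)"
    by (intro continuous_intros)
  then obtain a where a: "a \<in> A" "\<forall>x\<in>A. inner a e \<le> inner x e"
    using continuous_attains_inf[OF assms] by blast
  then have "min_inner A e = inner a e"
    unfolding min_inner_def by (intro cInf_eq_minimum) auto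
  with a that show ?thesis by blast
qed

lemma min_inner_le:
  fixes A :: "'a::euclidean_space set"
  assumes "compact A" "x \<in> A"
  shows "min_inner A e \<le> inner x e"
  using min_inner_attained[OF assms(1), of e] assms(2) by (metis empty_iff)

lemma min_inner_eqI:
  assumes "a \<in> A" "\<And>x. x \<in> A \<Longrightarrow> inner a e \<le> inner x e"
  shows "min_inner A e = inner a e"
  unfolding min_inner_def using assms by (intro cInf_eq_minimum) auto

lemma min_inner_set_plus:
  fixes A B :: "'a::euclidean_space set"
  assumes "compact A" "A \<noteq> {}" "compact B" "B \<noteq> {}"
  shows "min_inner (A + B) e = min_inner A e + min_inner B e"
proof -
  obtain a where a: "a \<in> A" "min_inner A e = inner a e" "\<And>x. x \<in> A \<Longrightarrow> inner a e \<le> inner x e"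
    using min_inner_attained[OF assms(1,2)] by metis
  obtain b where b: "b \<in> B" "min_inner B e = inner b e" "\<And>x. x \<in> B \<Longrightarrow> inner b e \<le> inner x e"
    using min_inner_attained[OF assms(3,4)] by metis
  have "min_inner (A + B) e = inner (a + b) e"
  proof (rule min_inner_eqI)
    show "a + b \<in> A + B"
      using a b by blast
    fix x assume "x \<in> A + B"
    then show "inner (a + b) e \<le> inner x e"
      using a(3) b(3) by (auto elim!: set_plus_elim simp: inner_add_left add_mono)
  qed
  with a b show ?thesis
    by (simp add: inner_add_left)
qed

text \<open>A point of A outside B is separated from B by a hyperplane; adding the point of C
  that minimises the normal keeps it separated.\<close>
lemma set_plus_right_cancel_subset:
  fixes A B C :: "'a::euclidean_space set"
  assumes "A + C \<subseteq> B + C" "closed B" "convex B" "compact C" "C \<noteq> {}"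
  shows "A \<subseteq> B"
proof
  fix p assume p: "p \<in> A"
  show "p \<in> B"
  proof (rule ccontr)
    assume "p \<notin> B"
    then obtain u b where ub: "inner u p < b" "\<forall>x\<in>B. inner u x > b"
      using separating_hyperplane_closed_point[OF assms(3,2)] by blast
    obtain c where c: "c \<in> C" "\<And>x. x \<in> C \<Longrightarrow> inner c u \<le> inner x u"
      using min_inner_attained[OF assms(4,5), of u] by metis
    have "p + c \<in> B + C"
      using assms(1) p c(1) by blast
    then obtain b' c' where bc: "b' \<in> B" "c' \<in> C" "p + c = b' + c'"
      by (auto elim: set_plus_elim)
    then have "inner u (p + c) = inner u b' + inner u c'"
      by (simp add: inner_add_right)
    moreover have "inner u b' > b"
      using ub bc(1) by auto
    moreover have "inner c u \<le> inner c' u"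
      using c bc(2) by auto
    ultimately show False
      using ub(1) by (simp add: inner_add_right inner_commute)
  qed
qed

lemma bounded_ray_eq_0:
  fixes a :: "'a::real_normed_vector"
  assumes "bounded S" "\<And>s. s \<ge> 0 \<Longrightarrow> s *\<^sub>R a \<in> S"
  shows "a = 0"
proof (rule ccontr)
  assume nz: "a \<noteq> 0"
  obtain B where B: "B > 0" "\<forall>y\<in>S. norm y \<le> B"
    using assms(1) bounded_pos by blast
  define t where "t = (B + 1) / norm a"
  have "t \<ge> 0"
    unfolding t_def using B by simp
  then have "norm (t *\<^sub>R a) \<le> B"
    using B assms(2) by blast
  moreover have "norm (t *\<^sub>R a) = B + 1"
    unfolding t_def using nz B by simp
  ultimately show False
    by simp
qed

lemma span_set_plus_eq_span_Un:
  fixes A B :: "'a::real_vector set"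
  assumes "0 \<in> A" "0 \<in> B"
  shows "span (A + B) = span (A \<union> B)"
proof (rule subset_antisym)
  have "A + B \<subseteq> span (A \<union> B)"
    by (auto elim!: set_plus_elim intro: span_add span_base)
  then show "span (A + B) \<subseteq> span (A \<union> B)"
    by (intro span_minimal) auto
  have "A \<union> B \<subseteq> A + B"
    using set_plus_intro[of _ A 0 B] set_plus_intro[of 0 A _ B] assms by force
  then show "span (A \<union> B) \<subseteq> span (A + B)"
    by (rule span_mono)
qed

lemma msum_insert: "finite T \<Longrightarrow> D \<notin> T \<Longrightarrow> msum (insert D T) = D + msum T"
  by (simp add: msum_def)

lemma msum_Union_disjoint:
  assumes "finite \<A>" "\<forall>X\<in>\<A>. finite X" "disjoint \<A>"
  shows "msum (\<Union>\<A>) = (\<Sum>X\<in>\<A>. msum X)"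
  unfolding msum_def using assms by (subst sum.Union_disjoint) (auto simp: pairwise_def disjnt_def)

definition orth_proj :: "'a::euclidean_space set \<Rightarrow> 'a \<Rightarrow> 'a" where
  "orth_proj S e = (SOME y. y \<in> span S \<and> (\<forall>w\<in>span S. inner w y = inner w e))"

lemma orth_proj_exists:
  fixes S :: "'a::euclidean_space set"
  shows "\<exists>y. y \<in> span S \<and> (\<forall>w\<in>span S. inner w y = inner w e)"
proof -
  obtain y z where yz: "y \<in> span S" "\<And>w. w \<in> span S \<Longrightarrow> orthogonal z w" "e = y + z"
    using orthogonal_subspace_decomp_exists[of S e] by metis
  have "inner w y = inner w e" if "w \<in> span S" for w
    using yz(2)[OF that] yz(3) by (simp add: inner_add_right orthogonal_def inner_commute)
  with yz(1) show ?thesis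
    by blast
qed

lemma
  fixes S :: "'a::euclidean_space set"
  shows orth_proj_in_span: "orth_proj S e \<in> span S"
  and inner_orth_proj: "w \<in> span S \<Longrightarrow> inner w (orth_proj S e) = inner w e"
  using someI_ex[OF orth_proj_exists[of S e]] unfolding orth_proj_def by auto

lemma subset_hyperplane_full_dim_imp_zero:
  fixes S :: "'a::euclidean_space set"
  assumes "aff_dim S = DIM('a)" "S \<subseteq> {x. w \<bullet> x = k}"
  shows "w = 0"
proof (rule ccontr)
  assume "w \<noteq> 0"
  have "aff_dim S \<le> aff_dim {x. w \<bullet> x = k}"
    using assms(2) by (rule aff_dim_subset)
  with \<open>w \<noteq> 0\<close> assms(1) show False
    by (simp add: aff_dim_hyperplane)
qed

lemma span_facet_eq_span:
  fixes S :: "'a::euclidean_space set"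
  assumes F: "F facet_of S" and "0 \<in> S" "0 \<notin> affine hull F"
  shows "span F = span S"
proof -
  have "int (dim F) = aff_dim (insert 0 F)"
    using aff_dim_zero[of "insert 0 F"] by (simp add: hull_inc dim_insert span_zero)
  also have "\<dots> = aff_dim F + 1"
    using aff_dim_insert[of 0 F] assms(3) by simp
  also have "\<dots> = aff_dim S"
    using F by (simp add: facet_of_def)
  also have "\<dots> = int (dim S)"
    using aff_dim_zero[of S] assms(2) by (simp add: hull_inc)
  finally have "dim (span F) = dim (span S)"
    by simp
  moreover have "span F \<subseteq> span S"
    using F by (intro span_mono) (auto simp: facet_of_def dest: face_of_imp_subset)
  ultimately show ?thesis
    using subspace_dim_equal[of "span F" "span S"] by simp
qed

section \<open>Lattice polytopes and primitive vectors\<close>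

lemma lattice_polytopeD:
  assumes "lattice_polytope P"
  shows "polytope P" "compact P" "convex P" "P \<noteq> {}"
  using assms unfolding lattice_polytope_def polytope_def
  by (auto intro: finite_imp_compact_convex_hull)

lemma lattice_polytope_face_lattice_point:
  assumes "lattice_polytope P" "F face_of P" "F \<noteq> {}"
  obtains v where "v \<in> F" "lattice_point v"
proof -
  obtain V where V: "\<forall>v\<in>V. lattice_point v" "P = convex hull V"
    using assms(1) lattice_polytope_def by blast
  have "compact F" "convex F"
    using face_of_imp_compact[of P F] face_of_imp_convex[of F P] assms lattice_polytopeD(2,3)
    by blast+
  then obtain v where "v extreme_point_of F"
    using extreme_point_exists_convex assms(3) by blast
  then have "v extreme_point_of P" "v \<in> F"
    using extreme_point_of_face assms(2) by blast+
  then have "v \<in> V"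
    using extreme_point_of_convex_hull V(2) by blast
  with V \<open>v \<in> F\<close> that show ?thesis
    by blast
qed

lemma lattice_polytope_set_plus:
  assumes "lattice_polytope P" "lattice_polytope Q"
  shows "lattice_polytope (P + Q)"
proof -
  obtain V where V: "finite V" "V \<noteq> {}" "\<forall>v\<in>V. lattice_point v" "P = convex hull V"
    using assms(1) lattice_polytope_def by blast
  obtain W where W: "finite W" "W \<noteq> {}" "\<forall>v\<in>W. lattice_point v" "Q = convex hull W"
    using assms(2) lattice_polytope_def by blast
  have "P + Q = convex hull (V + W)"
    by (simp add: convex_hull_set_plus V W)
  moreover have "finite (V + W)" "V + W \<noteq> {}"
    using V(1,2) W(1,2) by (auto simp: finite_set_plus)
  moreover have "\<forall>v\<in>V + W. lattice_point v"
    using V(3) W(3) by (auto elim!: set_plus_elim simp: lattice_point_def)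
  ultimately show ?thesis
    unfolding lattice_polytope_def by blast
qed

lemma lattice_polytope_msum:
  "finite T \<Longrightarrow> \<forall>D\<in>T. lattice_polytope D \<Longrightarrow> lattice_polytope (msum T)"
proof (induction T rule: finite_induct)
  case empty
  have "msum {} = convex hull {0::real^'a}"
    by (simp add: msum_def)
  moreover have "lattice_point (0::real^'a)"
    by (simp add: lattice_point_def)
  ultimately show ?case
    unfolding lattice_polytope_def by blast
next
  case (insert D T)
  then show ?case
    by (simp add: msum_insert lattice_polytope_set_plus)
qed

lemma dual_lattice_integral:
  "e \<in> dual_lattice L \<Longrightarrow> m \<in> L \<Longrightarrow> lattice_point m \<Longrightarrow> inner m e \<in> \<int>"
  unfolding dual_lattice_def by blast

lemma primitive_in_coprime_multiple:
  assumes e: "primitive_in L e" and L: "subspace L" and e': "e' \<in> dual_lattice L"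
    and cop: "coprime a b" and b: "b \<ge> (2::int)"
    and eq: "real_of_int b *\<^sub>R e' = real_of_int a *\<^sub>R e"
  shows False
proof -
  have eL: "e \<in> L"
    using e by (simp add: primitive_in_def dual_lattice_def)
  have "(1 / real_of_int b) *\<^sub>R e \<in> dual_lattice L"
    unfolding dual_lattice_def
  proof (intro CollectI conjI ballI impI)
    show "(1 / real_of_int b) *\<^sub>R e \<in> L"
      using eL L by (simp add: subspace_scale)
    fix m assume m: "m \<in> L" "lattice_point m"
    have "inner m e \<in> \<int>" "inner m e' \<in> \<int>"
      using e e' m dual_lattice_integral unfolding primitive_in_def by blast+
    then obtain n1 n2 where n1: "inner m e = of_int n1" and n2: "inner m e' = of_int n2"
      by (auto elim!: Ints_cases)
    have "inner m (real_of_int b *\<^sub>R e') = inner m (real_of_int a *\<^sub>R e)"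
      using eq by simp
    then have "b * n2 = a * n1"
      using n1 n2 by (simp flip: of_int_mult)
    then have "b dvd a * n1"
      by (metis dvdI)
    moreover have "coprime b a"
      using cop by (simp add: ac_simps)
    ultimately have "b dvd n1"
      by (simp add: coprime_dvd_mult_right_iff)
    then obtain k where "n1 = b * k" ..
    then have "inner m ((1 / real_of_int b) *\<^sub>R e) = of_int k"
      using n1 b by simp
    then show "inner m ((1 / real_of_int b) *\<^sub>R e) \<in> \<int>"
      by simp
  qed
  then show False
    using e b unfolding primitive_in_def by blast
qed

lemma primitive_in_positive_multiple_eq:
  assumes e1: "primitive_in L e1" and e2: "primitive_in L e2" and L: "subspace L"
    and A: "A > 0" and B: "B > (0::int)" and eq: "real_of_int B *\<^sub>R e2 = real_of_int A *\<^sub>R e1"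
  shows "e1 = e2"
proof -
  define g where "g = gcd A B"
  define a where "a = A div g"
  define b where "b = B div g"
  have g: "g > 0"
    using A g_def by simp
  have Aeq: "A = a * g" and Beq: "B = b * g"
    unfolding a_def b_def g_def by simp_all
  have cop: "coprime a b"
    unfolding a_def b_def g_def using A by (intro div_gcd_coprime) auto
  have "a > 0" "b > 0"
    using A B g Aeq Beq by (auto simp: zero_less_mult_iff)
  have "real_of_int g *\<^sub>R (real_of_int b *\<^sub>R e2 - real_of_int a *\<^sub>R e1) = 0"
    using eq unfolding Aeq Beq by (simp add: scaleR_diff_right scaleR_scaleR mult.commute)
  then have eq': "real_of_int b *\<^sub>R e2 = real_of_int a *\<^sub>R e1"
    using g by simp
  have "b = 1"
  proof (rule ccontr)
    assume "b \<noteq> 1"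
    with \<open>b > 0\<close> have "b \<ge> 2" by linarith
    then show False
      using primitive_in_coprime_multiple[OF e1 L _ cop _ eq'] e2 by (simp add: primitive_in_def)
  qed
  moreover have "a = 1"
  proof (rule ccontr)
    assume "a \<noteq> 1"
    with \<open>a > 0\<close> have "a \<ge> 2" by linarith
    then show False
      using primitive_in_coprime_multiple[OF e2 L _ _ _ eq'[symmetric]] e1 cop
      by (simp add: primitive_in_def ac_simps)
  qed
  ultimately show ?thesis
    using eq' by simp
qed

lemma primitive_in_if_value_minus_one:
  assumes "e \<in> dual_lattice L" "v \<in> L" "lattice_point v" "inner v e = -1"
  shows "primitive_in L e"
proof -
  have "(1 / real_of_int k) *\<^sub>R e \<notin> dual_lattice L" if "k \<ge> 2" for k :: int
  proof
    assume "(1 / real_of_int k) *\<^sub>R e \<in> dual_lattice L"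
    then have "inner v ((1 / real_of_int k) *\<^sub>R e) \<in> \<int>"
      using dual_lattice_integral assms(2,3) by blast
    then have "1 / real_of_int k \<in> \<int>"
      using assms(4) by simp
    then obtain n where n: "1 / real_of_int k = of_int n"
      by (elim Ints_cases)
    have "real_of_int k \<ge> 2"
      using that by simp
    then have "1 / real_of_int k > 0" "1 / real_of_int k < 1"
      by (auto simp: field_simps)
    then have "n > 0" "n < 1"
      unfolding n by simp_all
    then show False
      by simp
  qed
  then show ?thesis
    using assms unfolding primitive_in_def by auto
qed

lemma primitive_in_integer_multiple:
  assumes "primitive_in L (real_of_int k *\<^sub>R e)" "e \<in> dual_lattice L" "k > 0"
  shows "k = 1"
proof (rule ccontr)
  assume "k \<noteq> 1"
  with assms(3) have "k \<ge> 2" by linarith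
  moreover have "(1 / real_of_int k) *\<^sub>R (real_of_int k *\<^sub>R e) = e"
    using assms(3) by simp
  ultimately have "\<exists>j::int. j \<ge> 2 \<and> (1 / real_of_int j) *\<^sub>R (real_of_int k *\<^sub>R e) \<in> dual_lattice L"
    using assms(2) by auto
  then show False
    using assms(1) unfolding primitive_in_def by blast
qed

section \<open>Facet normals of a full-dimensional reflexive polytope\<close>

locale reflexive_nef_partition =
  fixes Delta :: "(real^'d) set" and Parts :: "(real^'d) set set"
  assumes Delta_full_dim: "aff_dim Delta = int CARD('d)"
    and Delta_reflexive: "reflexive Delta"
    and Parts_nef_partition: "nef_partition Delta Parts"
begin

abbreviation normals :: "(real^'d) set" where
  "normals \<equiv> facet_normals Delta"

lemma span_Delta: "span Delta = UNIV"
proof -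
  have "affine hull Delta = UNIV"
    using Delta_full_dim aff_dim_eq_full[of Delta] by simp
  then show ?thesis
    using affine_hull_subset_span by blast
qed

lemma mem_Delta_iff: "x \<in> Delta \<longleftrightarrow> (\<forall>e\<in>normals. inner x e \<ge> -1)"
  using Delta_reflexive span_Delta unfolding reflexive_def by blast

lemma Delta_lattice_polytope: "lattice_polytope Delta"
  using Delta_reflexive reflexive_def by blast

lemma normal_iff: "e \<in> normals \<longleftrightarrow> primitive_in UNIV e \<and>
     (\<exists>F c. F facet_of Delta \<and> Delta \<subseteq> {x. inner x e \<ge> c} \<and> F \<subseteq> {x. inner x e = c})"
  unfolding facet_normals_def span_Delta by simp

lemma normal_integral: "e \<in> normals \<Longrightarrow> lattice_point m \<Longrightarrow> inner m e \<in> \<int>"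
  unfolding normal_iff primitive_in_def dual_lattice_def by auto

lemma normal_nonzero: "e \<in> normals \<Longrightarrow> e \<noteq> 0"
  unfolding normal_iff primitive_in_def by auto

lemma facet_opposite_lattice_point:
  assumes "F facet_of Delta"
  obtains p where "p \<in> Delta" "lattice_point p" "aff_dim (insert p F) = DIM(real^'d)"
proof -
  obtain V where V: "\<forall>v\<in>V. lattice_point v" "Delta = convex hull V"
    using Delta_lattice_polytope lattice_polytope_def by blast
  have F: "aff_dim F = aff_dim Delta - 1"
    using assms facet_of_def by auto
  have "\<not> V \<subseteq> affine hull F"
  proof
    assume "V \<subseteq> affine hull F"
    then have "Delta \<subseteq> affine hull F"
      unfolding V(2) by (intro hull_minimal affine_imp_convex affine_affine_hull)
    then have "aff_dim Delta \<le> aff_dim (affine hull F)"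
      by (rule aff_dim_subset)
    with F show False
      by simp
  qed
  then obtain p where p: "p \<in> V" "p \<notin> affine hull F"
    by blast
  have "p \<in> Delta"
    using p(1) V(2) hull_inc[of p V convex] by simp
  moreover have "aff_dim (insert p F) = DIM(real^'d)"
    using aff_dim_insert[of p F] p F Delta_full_dim by simp
  ultimately show ?thesis
    using that p V(1) by blast
qed

lemma facet_lattice_distance:
  assumes e: "e \<in> normals" and F: "F facet_of Delta"
    and s: "Delta \<subseteq> {x. inner x e \<ge> c}" "F \<subseteq> {x. inner x e = c}"
    and p: "p \<in> Delta" "lattice_point p" and full: "aff_dim (insert p F) = DIM(real^'d)"
  obtains G :: int where "inner p e - c = of_int G" "G > 0"
proof -
  obtain v where v: "v \<in> F" "lattice_point v"
    using lattice_polytope_face_lattice_point[OF Delta_lattice_polytope, of F] F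
    by (auto simp: facet_of_def)
  have "c = inner v e"
    using v s(2) by auto
  then have "inner p e - c \<in> \<int>"
    using normal_integral[OF e] v(2) p(2) by auto
  then obtain G where G: "inner p e - c = of_int G"
    by (elim Ints_cases)
  have "inner p e \<noteq> c"
  proof
    assume "inner p e = c"
    then have "insert p F \<subseteq> {x. e \<bullet> x = c}"
      using s(2) by (auto simp: inner_commute)
    then show False
      using subset_hyperplane_full_dim_imp_zero[OF full] normal_nonzero[OF e] by blast
  qed
  then have "inner p e - c > 0"
    using s(1) p(1) by force
  with G that show ?thesis
    by simp
qed

text \<open>With G1, G2 the lattice distances of a lattice point p off F, the vector
  G1 e2 - G2 e1 is constant on the full-dimensional set insert p F, hence zero; so e1 and e2 are
  positive rational multiples of each other, and primitivity makes them equal.\<close>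
lemma facet_normal_unique:
  assumes e1: "e1 \<in> normals" and e2: "e2 \<in> normals" and F: "F facet_of Delta"
    and s1: "Delta \<subseteq> {x. inner x e1 \<ge> c1}" "F \<subseteq> {x. inner x e1 = c1}"
    and s2: "Delta \<subseteq> {x. inner x e2 \<ge> c2}" "F \<subseteq> {x. inner x e2 = c2}"
  shows "e1 = e2"
proof -
  obtain p where p: "p \<in> Delta" "lattice_point p" and full: "aff_dim (insert p F) = DIM(real^'d)"
    using facet_opposite_lattice_point[OF F] by blast
  obtain G1 G2 :: int where G1: "inner p e1 - c1 = of_int G1" "G1 > 0"
    and G2: "inner p e2 - c2 = of_int G2" "G2 > 0"
    using facet_lattice_distance[OF e1 F s1 p full] facet_lattice_distance[OF e2 F s2 p full]
    by metis
  define w where "w = real_of_int G1 *\<^sub>R e2 - real_of_int G2 *\<^sub>R e1"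
  define k where "k = real_of_int G1 * c2 - real_of_int G2 * c1"
  have "insert p F \<subseteq> {x. w \<bullet> x = k}"
  proof
    fix x assume "x \<in> insert p F"
    then consider "x = p" | "inner x e1 = c1" "inner x e2 = c2"
      using s1 s2 by blast
    then show "x \<in> {x. w \<bullet> x = k}"
    proof cases
      case 1
      have "w \<bullet> p = real_of_int G1 * inner p e2 - real_of_int G2 * inner p e1"
        unfolding w_def by (simp add: inner_diff_left inner_diff_right inner_commute[of _ p])
      also have "\<dots> = k"
        unfolding k_def using G1(1) G2(1) by (simp add: algebra_simps)
      finally show ?thesis
        using 1 by simp
    next
      case 2
      then show ?thesis
        unfolding w_def k_def by (simp add: inner_diff_left inner_diff_right inner_commute[of _ x])
    qed
  qed
  then have "w = 0"
    using subset_hyperplane_full_dim_imp_zero[OF full] by blast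
  then have "real_of_int G1 *\<^sub>R e2 = real_of_int G2 *\<^sub>R e1"
    unfolding w_def by simp
  moreover have "primitive_in UNIV e1" "primitive_in UNIV e2"
    using e1 e2 normal_iff by blast+
  ultimately show ?thesis
    using primitive_in_positive_multiple_eq[OF _ _ subspace_UNIV] G1(2) G2(2) by blast
qed

lemma finite_normals: "finite normals"
proof -
  define supports where "supports e F \<longleftrightarrow>
    (\<exists>c. F facet_of Delta \<and> Delta \<subseteq> {x. inner x e \<ge> c} \<and> F \<subseteq> {x. inner x e = c})" for e F
  define facet where "facet e = (SOME F. supports e F)" for e
  have supports: "supports e (facet e)" if "e \<in> normals" for e
    using that someI_ex[of "supports e"] unfolding facet_def normal_iff supports_def by blast
  have "inj_on facet normals"
  proof (rule inj_onI)
    fix e1 e2 assume e: "e1 \<in> normals" "e2 \<in> normals" "facet e1 = facet e2"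
    then obtain c1 c2 where "facet e1 facet_of Delta"
      "Delta \<subseteq> {x. inner x e1 \<ge> c1}" "facet e1 \<subseteq> {x. inner x e1 = c1}"
      "Delta \<subseteq> {x. inner x e2 \<ge> c2}" "facet e1 \<subseteq> {x. inner x e2 = c2}"
      using supports[of e1] supports[of e2] unfolding supports_def by auto
    with e show "e1 = e2"
      using facet_normal_unique by blast
  qed
  moreover have "facet ` normals \<subseteq> {F. F face_of Delta}"
    using supports unfolding supports_def facet_of_def by auto
  moreover have "finite {F. F face_of Delta}"
    using finite_polytope_faces lattice_polytopeD(1)[OF Delta_lattice_polytope] by blast
  ultimately show ?thesis
    using inj_on_finite by blast
qed

lemma ball_subset_Delta:
  obtains r where "r > 0" "ball 0 r \<subseteq> Delta"
proof -
  define U where "U = (\<Inter>e\<in>normals. {x. inner x e > -1})"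
  have "open U"
    unfolding U_def by (rule open_INT[OF finite_normals]) (simp add: open_halfspace_component_gt)
  moreover have "0 \<in> U"
    unfolding U_def by simp
  ultimately obtain r where "r > 0" "ball 0 r \<subseteq> U"
    using open_contains_ball by blast
  moreover have "U \<subseteq> Delta"
  proof
    fix x assume "x \<in> U"
    then have "\<forall>e\<in>normals. inner x e \<ge> -1"
      unfolding U_def by fastforce
    then show "x \<in> Delta"
      using mem_Delta_iff by blast
  qed
  ultimately show ?thesis
    using that by blast
qed

lemma neg_scaled_mem_Delta:
  obtains t where "t > 0" "- t *\<^sub>R x \<in> Delta"
proof -
  obtain r where r: "r > 0" "ball 0 r \<subseteq> Delta"
    using ball_subset_Delta by blast
  have nx: "norm x + 1 > 0"
    using norm_ge_zero[of x] by linarith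
  define t where "t = r / (2 * (norm x + 1))"
  have t: "t > 0"
    unfolding t_def using r(1) nx by simp
  have "norm (- t *\<^sub>R x) = t * norm x"
    using t by simp
  also have "\<dots> < t * (norm x + 1)"
    using t by (simp add: algebra_simps)
  also have "\<dots> = r / 2"
    unfolding t_def using nx by (simp add: field_simps)
  finally have "- t *\<^sub>R x \<in> ball 0 r"
    using r(1) by simp
  with t r(2) that show ?thesis
    by blast
qed

lemma normals_nonneg_imp_zero:
  assumes "\<forall>e\<in>normals. inner x e \<ge> 0"
  shows "x = 0"
proof (rule bounded_ray_eq_0)
  show "bounded Delta"
    using compact_imp_bounded lattice_polytopeD(2)[OF Delta_lattice_polytope] .
  fix s :: real assume "s \<ge> 0"
  have "inner (s *\<^sub>R x) e \<ge> -1" if "e \<in> normals" for e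
  proof -
    have "s * inner x e \<ge> 0"
      using assms that \<open>s \<ge> 0\<close> by simp
    then show ?thesis
      by simp
  qed
  then show "s *\<^sub>R x \<in> Delta"
    unfolding mem_Delta_iff by blast
qed

lemma normal_attains_minus_one:
  assumes e: "e \<in> normals"
  obtains v where "v \<in> Delta" "inner v e = -1"
proof -
  obtain F c where F: "F facet_of Delta" "Delta \<subseteq> {x. inner x e \<ge> c}" "F \<subseteq> {x. inner x e = c}"
    using e normal_iff by blast
  obtain v where v: "v \<in> F" "lattice_point v"
    using lattice_polytope_face_lattice_point[OF Delta_lattice_polytope, of F] F(1)
    by (auto simp: facet_of_def)
  have vD: "v \<in> Delta"
    using v F(1) face_of_imp_subset facet_of_def by blast
  have cv: "c = inner v e"
    using v F by auto
  obtain n where n: "c = of_int n"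
    using cv normal_integral[OF e v(2)] by (auto elim: Ints_cases)
  have "c \<ge> -1"
    using cv vD e mem_Delta_iff by auto
  moreover have "c < 0"
  proof -
    obtain t where t: "t > 0" "- t *\<^sub>R e \<in> Delta"
      by (rule neg_scaled_mem_Delta)
    then have "c \<le> inner (- t *\<^sub>R e) e"
      using F(2) by blast
    also have "\<dots> = - (t * inner e e)"
      by simp
    also have "\<dots> < 0"
      using t(1) normal_nonzero[OF e] by simp
    finally show ?thesis .
  qed
  ultimately have "n = -1"
    using n by linarith
  then show ?thesis
    using that vD cv n by simp
qed

lemma min_inner_Delta:
  assumes "e \<in> normals"
  shows "min_inner Delta e = -1"
proof -
  obtain v where "v \<in> Delta" "inner v e = -1"
    using normal_attains_minus_one[OF assms] by blast
  with assms show ?thesis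
    using min_inner_eqI[of v Delta e] mem_Delta_iff by auto
qed

section \<open>Partial sums of the nef-partition\<close>

lemma Parts_finite: "finite Parts"
  and Parts_nonempty: "Parts \<noteq> {}"
  and Parts_lattice_polytope: "D \<in> Parts \<Longrightarrow> lattice_polytope D"
  and Parts_nonzero: "D \<in> Parts \<Longrightarrow> D \<noteq> {0}"
  and Delta_eq_msum: "Delta = msum Parts"
  using Parts_nef_partition unfolding nef_partition_def by auto

lemma min_inner_part: "D \<in> Parts \<Longrightarrow> e \<in> normals \<Longrightarrow> min_inner D e \<in> {0, -1}"
  using Parts_nef_partition unfolding nef_partition_def min_inner_def by force

lemma msum_lattice_polytope: "T \<subseteq> Parts \<Longrightarrow> lattice_polytope (msum T)"
  using lattice_polytope_msum[of T] Parts_lattice_polytope finite_subset[OF _ Parts_finite] by blast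

lemma
  assumes "T \<subseteq> Parts"
  shows msum_compact: "compact (msum T)"
    and msum_convex: "convex (msum T)"
    and msum_nonempty: "msum T \<noteq> {}"
  using lattice_polytopeD[OF msum_lattice_polytope[OF assms]] by auto

lemma min_inner_msum_le: "T \<subseteq> Parts \<Longrightarrow> x \<in> msum T \<Longrightarrow> min_inner (msum T) e \<le> inner x e"
  by (rule min_inner_le[OF msum_compact])

lemma min_inner_msum: "T \<subseteq> Parts \<Longrightarrow> min_inner (msum T) e = (\<Sum>D\<in>T. min_inner D e)"
proof (induction T rule: infinite_finite_induct)
  case (infinite T)
  then show ?case
    using finite_subset[OF _ Parts_finite] by blast
next
  case empty
  then show ?case
    by (simp add: msum_def min_inner_def)
next
  case (insert D T)
  then have "min_inner (msum (insert D T)) e = min_inner (D + msum T) e"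
    by (simp add: msum_insert)
  also have "\<dots> = min_inner D e + min_inner (msum T) e"
    using insert lattice_polytopeD[OF Parts_lattice_polytope, of D] msum_compact msum_nonempty
    by (intro min_inner_set_plus) auto
  finally show ?case
    using insert by simp
qed

text \<open>The minima over T and over its complement are sums of part minima, hence nonpositive
  integers, and they add up to the minimum -1 over Delta.\<close>
lemma
  assumes T: "T \<subseteq> Parts" and e: "e \<in> normals"
  shows min_inner_msum_compl: "min_inner (msum T) e + min_inner (msum (Parts - T)) e = -1"
    and min_inner_msum_cases: "min_inner (msum T) e = 0 \<or> min_inner (msum T) e = -1"
proof -
  have sum_int: "min_inner (msum S) e \<in> \<int>" "min_inner (msum S) e \<le> 0" if S: "S \<subseteq> Parts" for S
  proof -
    have "min_inner D e \<in> \<int> \<and> min_inner D e \<le> 0" if "D \<in> S" for D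
    proof -
      have "D \<in> Parts"
        using that S by blast
      then show ?thesis
        using min_inner_part[of D e] e by auto
    qed
    then show "min_inner (msum S) e \<in> \<int>" "min_inner (msum S) e \<le> 0"
      unfolding min_inner_msum[OF S] by (auto intro!: Ints_sum sum_nonpos)
  qed
  have "min_inner Delta e = (\<Sum>D\<in>T. min_inner D e) + (\<Sum>D\<in>Parts - T. min_inner D e)"
    using min_inner_msum[of Parts e] sum.subset_diff[OF T Parts_finite, of "\<lambda>D. min_inner D e"]
      Delta_eq_msum by simp
  then show sum: "min_inner (msum T) e + min_inner (msum (Parts - T)) e = -1"
    using min_inner_Delta[OF e] min_inner_msum[OF T] min_inner_msum[of "Parts - T"] by simp
  obtain a b where a: "min_inner (msum T) e = of_int a" and b: "min_inner (msum (Parts - T)) e = of_int b"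
    using sum_int(1)[OF T] sum_int(1)[of "Parts - T"] by (auto elim!: Ints_cases)
  have "a \<le> 0" "b \<le> 0" "a + b = -1"
    using sum_int(2)[OF T] sum_int(2)[of "Parts - T"] sum a b by (simp_all flip: of_int_add)
  then show "min_inner (msum T) e = 0 \<or> min_inner (msum T) e = -1"
    using a by auto
qed

lemma min_inner_msum_nonpos: "T \<subseteq> Parts \<Longrightarrow> e \<in> normals \<Longrightarrow> min_inner (msum T) e \<le> 0"
  using min_inner_msum_cases[of T e] by linarith

lemma msum_split:
  assumes "T \<subseteq> U" "U \<subseteq> Parts"
  shows "msum U = msum T + msum (U - T)"
proof -
  have "finite U"
    using assms(2) finite_subset Parts_finite by blast
  then show ?thesis
    unfolding msum_def using sum.subset_diff[OF assms(1), of "\<lambda>P. P"] by (simp add: add.commute)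
qed

text \<open>The complementary sum makes up the difference to Delta, and Minkowski cancellation
  removes it again.\<close>
lemma msum_eq_halfspaces:
  assumes T: "T \<subseteq> Parts"
  shows "msum T = {x. \<forall>e\<in>normals. inner x e \<ge> min_inner (msum T) e}"
proof
  show "msum T \<subseteq> {x. \<forall>e\<in>normals. inner x e \<ge> min_inner (msum T) e}"
    using min_inner_msum_le[OF T] by auto
  let ?A = "{x. \<forall>e\<in>normals. inner x e \<ge> min_inner (msum T) e}"
  have TP: "Parts - T \<subseteq> Parts"
    by auto
  have "?A + msum (Parts - T) \<subseteq> msum T + msum (Parts - T)"
  proof
    fix z assume "z \<in> ?A + msum (Parts - T)"
    then obtain x c where xc: "x \<in> ?A" "c \<in> msum (Parts - T)" "z = x + c"
      by (auto elim: set_plus_elim)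
    have "inner z e \<ge> -1" if e: "e \<in> normals" for e
    proof -
      have "inner x e \<ge> min_inner (msum T) e"
        using xc(1) e by auto
      moreover have "inner c e \<ge> min_inner (msum (Parts - T)) e"
        using min_inner_msum_le[OF TP xc(2)] by simp
      ultimately show ?thesis
        using min_inner_msum_compl[OF T e] xc(3) by (simp add: inner_add_left)
    qed
    then have "z \<in> Delta"
      using mem_Delta_iff by blast
    then show "z \<in> msum T + msum (Parts - T)"
      using msum_split[OF T] Delta_eq_msum by auto
  qed
  then show "?A \<subseteq> msum T"
    by (rule set_plus_right_cancel_subset[OF _ compact_imp_closed[OF msum_compact[OF T]]
          msum_convex[OF T] msum_compact[OF TP] msum_nonempty[OF TP]])
qed

lemma mem_msumI:
  assumes "T \<subseteq> Parts" "\<And>e. e \<in> normals \<Longrightarrow> inner x e \<ge> min_inner (msum T) e"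
  shows "x \<in> msum T"
  using assms msum_eq_halfspaces by blast

lemma zero_in_msum: "T \<subseteq> Parts \<Longrightarrow> 0 \<in> msum T"
  by (rule mem_msumI) (auto simp: min_inner_msum_nonpos)

lemma msum_mono:
  assumes "T \<subseteq> U" "U \<subseteq> Parts"
  shows "msum T \<subseteq> msum U"
proof
  fix x assume "x \<in> msum T"
  moreover have "0 \<in> msum (U - T)"
    using zero_in_msum assms by blast
  ultimately have "x + 0 \<in> msum T + msum (U - T)"
    by blast
  then show "x \<in> msum U"
    using msum_split[OF assms] by simp
qed

lemma part_subset_msum: "D \<in> T \<Longrightarrow> T \<subseteq> Parts \<Longrightarrow> D \<subseteq> msum T"
  using msum_mono[of "{D}" T] by (simp add: msum_def)

lemma msum_subset_Delta: "T \<subseteq> Parts \<Longrightarrow> msum T \<subseteq> Delta"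
  using msum_mono[of T Parts] Delta_eq_msum by simp

section \<open>Centred subfamilies\<close>

definition centred :: "(real^'d) set set \<Rightarrow> bool" where
  "centred T \<longleftrightarrow> T \<subseteq> Parts \<and> 0 \<in> rel_interior (msum T)"

definition tight_normals :: "(real^'d) set set \<Rightarrow> (real^'d) set" where
  "tight_normals T = {e \<in> normals. min_inner (msum T) e = -1}"

definition support_space :: "(real^'d) set set \<Rightarrow> (real^'d) set" where
  "support_space T = {x. \<forall>e \<in> normals - tight_normals T. inner x e = 0}"

lemma centred_subset: "centred T \<Longrightarrow> T \<subseteq> Parts"
  unfolding centred_def by blast

lemma subspace_support_space: "subspace (support_space T)"
  unfolding subspace_def support_space_def by (auto simp: inner_add_left)

lemma tight_normals_compl:
  assumes "T \<subseteq> Parts"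
  shows "tight_normals (Parts - T) = normals - tight_normals T"
proof -
  have "min_inner (msum (Parts - T)) e = -1 \<longleftrightarrow> min_inner (msum T) e \<noteq> -1" if "e \<in> normals" for e
    using min_inner_msum_compl[OF assms that] min_inner_msum_cases[OF assms that] by linarith
  then show ?thesis
    unfolding tight_normals_def by blast
qed

lemma support_space_compl:
  assumes "T \<subseteq> Parts"
  shows "support_space (Parts - T) = {x. \<forall>e \<in> tight_normals T. inner x e = 0}"
proof -
  have "normals - tight_normals (Parts - T) = tight_normals T"
    using tight_normals_compl[OF assms] unfolding tight_normals_def by blast
  then show ?thesis
    unfolding support_space_def by simp
qed

lemma support_space_Int_compl:
  assumes "T \<subseteq> Parts" "x \<in> support_space T" "x \<in> support_space (Parts - T)"
  shows "x = 0"
proof (rule normals_nonneg_imp_zero)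
  have "\<forall>e \<in> tight_normals T. inner x e = 0"
    using assms(3) support_space_compl[OF assms(1)] by blast
  moreover have "\<forall>e \<in> normals - tight_normals T. inner x e = 0"
    using assms(2) unfolding support_space_def by blast
  ultimately show "\<forall>e\<in>normals. inner x e \<ge> 0"
    by (metis DiffI order_refl)
qed

lemma tight_normal_nonneg_on_compl:
  assumes "T \<subseteq> Parts" "y \<in> msum (Parts - T)" "e \<in> tight_normals T"
  shows "inner y e \<ge> 0"
proof -
  have "min_inner (msum (Parts - T)) e = 0"
    using assms(1,3) min_inner_msum_compl[of T e] unfolding tight_normals_def by auto
  then show ?thesis
    using min_inner_msum_le[OF _ assms(2), of e] by simp
qed

lemma centred_msum_subset_support_space:
  assumes "centred T"
  shows "msum T \<subseteq> support_space T"
proof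
  fix x assume x: "x \<in> msum T"
  have T: "T \<subseteq> Parts"
    using assms centred_subset by blast
  obtain r where r: "r > 0" "ball 0 r \<inter> affine hull (msum T) \<subseteq> msum T"
    using assms mem_rel_interior_ball unfolding centred_def by blast
  have "affine hull (msum T) = span (msum T)"
    using zero_in_msum[OF T] by (intro affine_hull_span_0) (simp add: hull_inc)
  then have small: "y \<in> msum T" if "y \<in> span (msum T)" "norm y < r" for y
    using r that by auto
  show "x \<in> support_space T"
    unfolding support_space_def
  proof (intro CollectI ballI)
    fix e assume e: "e \<in> normals - tight_normals T"
    then have "min_inner (msum T) e = 0"
      using min_inner_msum_cases[OF T] unfolding tight_normals_def by auto
    then have nonneg: "inner y e \<ge> 0" if "y \<in> msum T" for y
      using min_inner_msum_le[OF T that, of e] by simp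
    show "inner x e = 0"
    proof (rule ccontr)
      assume "inner x e \<noteq> 0"
      with nonneg[OF x] have pos: "inner x e > 0"
        by simp
      then have "x \<noteq> 0"
        by auto
      define y where "y = - (r / (2 * norm x)) *\<^sub>R x"
      have "y \<in> msum T"
      proof (rule small)
        show "y \<in> span (msum T)"
          unfolding y_def using x by (intro span_scale span_base)
        show "norm y < r"
          unfolding y_def using \<open>x \<noteq> 0\<close> r by simp
      qed
      moreover have "inner y e < 0"
        unfolding y_def using pos \<open>x \<noteq> 0\<close> r by (simp add: mult_pos_pos)
      ultimately show False
        using nonneg by force
    qed
  qed
qed

text \<open>If \<open>\<langle>x, e\<rangle> > 0\<close> for a tight normal e of T, write \<open>-t x = a + b\<close> with a in msum T and
  b in the complementary sum; then all facet normals are nonnegative on -a, so a = 0, and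
  \<open>b = -t x\<close> violates \<open>\<langle>b, e\<rangle> \<ge> 0\<close>.\<close>
lemma centred_compl_msum_subset_support_space:
  assumes "centred T"
  shows "msum (Parts - T) \<subseteq> support_space (Parts - T)"
proof
  fix x assume x: "x \<in> msum (Parts - T)"
  have T: "T \<subseteq> Parts"
    using assms centred_subset by auto
  note nonneg = tight_normal_nonneg_on_compl[OF T]
  show "x \<in> support_space (Parts - T)"
    unfolding support_space_compl[OF T]
  proof (intro CollectI ballI)
    fix e assume e: "e \<in> tight_normals T"
    show "inner x e = 0"
    proof (rule ccontr)
      assume "inner x e \<noteq> 0"
      with nonneg[OF x e] have pos: "inner x e > 0"
        by simp
      obtain t where t: "t > 0" "- t *\<^sub>R x \<in> Delta"
        by (rule neg_scaled_mem_Delta)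
      then have "- t *\<^sub>R x \<in> msum T + msum (Parts - T)"
        using msum_split[OF T] Delta_eq_msum by auto
      then obtain a b where a: "a \<in> msum T" and b: "b \<in> msum (Parts - T)"
        and ab: "- t *\<^sub>R x = a + b"
        by (auto elim: set_plus_elim)
      have "inner (- a) e' \<ge> 0" if e': "e' \<in> normals" for e'
      proof (cases "e' \<in> tight_normals T")
        case True
        have "inner (- a) e' = t * inner x e' + inner b e'"
          using arg_cong[OF ab, of "\<lambda>z. inner z e'"] by (simp add: inner_add_left)
        then show ?thesis
          using nonneg[OF x True] nonneg[OF b True] t(1) by simp
      next
        case False
        then show ?thesis
          using centred_msum_subset_support_space[OF assms] a e' unfolding support_space_def by auto
      qed
      then have "a = 0"
        using normals_nonneg_imp_zero[of "- a"] by simp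
      then have "b = - t *\<^sub>R x"
        using ab by simp
      then have "inner b e = - t * inner x e"
        by simp
      moreover have "t * inner x e > 0"
        using t(1) pos by simp
      ultimately show False
        using nonneg[OF b e] by linarith
    qed
  qed
qed

lemma centred_compl:
  assumes "centred T"
  shows "centred (Parts - T)"
proof -
  have T: "T \<subseteq> Parts" and TP: "Parts - T \<subseteq> Parts"
    using assms centred_subset by auto
  obtain r where r: "r > 0" "ball 0 r \<subseteq> Delta"
    using ball_subset_Delta by blast
  have hull: "affine hull (msum (Parts - T)) \<subseteq> support_space (Parts - T)"
    using centred_compl_msum_subset_support_space[OF assms]
    by (intro hull_minimal subspace_imp_affine subspace_support_space)
  have "ball 0 r \<inter> affine hull (msum (Parts - T)) \<subseteq> msum (Parts - T)"
  proof
    fix y assume "y \<in> ball 0 r \<inter> affine hull (msum (Parts - T))"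
    then have yD: "y \<in> Delta" and yS: "y \<in> support_space (Parts - T)"
      using r hull by auto
    show "y \<in> msum (Parts - T)"
    proof (rule mem_msumI[OF TP])
      fix e assume e: "e \<in> normals"
      show "inner y e \<ge> min_inner (msum (Parts - T)) e"
      proof (cases "e \<in> tight_normals T")
        case True
        then show ?thesis
          using yS support_space_compl[OF T] min_inner_msum_nonpos[OF TP e] by auto
      next
        case False
        then have "min_inner (msum (Parts - T)) e = -1"
          using tight_normals_compl[OF T] e unfolding tight_normals_def by blast
        then show ?thesis
          using yD e mem_Delta_iff by auto
      qed
    qed
  qed
  then have "0 \<in> rel_interior (msum (Parts - T))"
    using mem_rel_interior_ball zero_in_msum[OF TP] r(1) by blast
  then show ?thesis
    unfolding centred_def by auto
qed

lemma centred_Int: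
  assumes "centred T" "centred U"
  shows "centred (T \<inter> U)"
proof -
  have T: "T \<subseteq> Parts" and U: "U \<subseteq> Parts" and TU: "T \<inter> U \<subseteq> Parts"
    using assms centred_subset by auto
  obtain r where r: "r > 0" "ball 0 r \<inter> affine hull (msum U) \<subseteq> msum U"
    using assms(2) mem_rel_interior_ball unfolding centred_def by blast
  have "ball 0 r \<inter> affine hull (msum (T \<inter> U)) \<subseteq> msum (T \<inter> U)"
  proof
    fix y assume y: "y \<in> ball 0 r \<inter> affine hull (msum (T \<inter> U))"
    have "affine hull (msum (T \<inter> U)) \<subseteq> affine hull (msum U)"
      using msum_mono[of "T \<inter> U" U] U by (intro hull_mono) auto
    then have "y \<in> msum U"
      using y r by blast
    then have "y \<in> msum (T \<inter> U) + msum (U - T \<inter> U)"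
      using msum_split[of "T \<inter> U" U] U by auto
    then obtain a b where a: "a \<in> msum (T \<inter> U)" and b: "b \<in> msum (U - T \<inter> U)" and y_eq: "y = a + b"
      by (auto elim: set_plus_elim)
    have "msum (U - T \<inter> U) \<subseteq> msum (Parts - T)"
      using msum_mono[of "U - T \<inter> U" "Parts - T"] U by auto
    then have b_compl: "b \<in> support_space (Parts - T)"
      using b centred_compl_msum_subset_support_space[OF assms(1)] by blast
    have "msum (T \<inter> U) \<subseteq> support_space T"
      using msum_mono[of "T \<inter> U" T] T centred_msum_subset_support_space[OF assms(1)] by auto
    then have "affine hull (msum (T \<inter> U)) \<subseteq> support_space T"
      by (intro hull_minimal subspace_imp_affine subspace_support_space)
    then have "y \<in> support_space T" "a \<in> support_space T"
      using y a hull_subset[of "msum (T \<inter> U)"] by blast+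
    then have "b \<in> support_space T"
      using y_eq subspace_diff[OF subspace_support_space] by force
    then have "b = 0"
      using support_space_Int_compl[OF T _ b_compl] by simp
    then show "y \<in> msum (T \<inter> U)"
      using a y_eq by simp
  qed
  then have "0 \<in> rel_interior (msum (T \<inter> U))"
    using mem_rel_interior_ball zero_in_msum[OF TU] r(1) by blast
  then show ?thesis
    unfolding centred_def using TU by auto
qed

lemma centred_empty: "centred {}"
  unfolding centred_def by (simp add: msum_def)

lemma centred_Parts: "centred Parts"
  using centred_compl[OF centred_empty] by simp

lemma centred_Un:
  assumes "centred T" "centred U"
  shows "centred (T \<union> U)"
proof -
  have "T \<union> U = Parts - ((Parts - T) \<inter> (Parts - U))"
    using assms centred_subset by auto
  then show ?thesis
    using assms centred_compl centred_Int by metis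
qed

lemma centred_Diff:
  assumes "centred T" "centred U"
  shows "centred (T - U)"
proof -
  have "T - U = T \<inter> (Parts - U)"
    using assms centred_subset by auto
  then show ?thesis
    using assms centred_compl centred_Int by metis
qed

lemma centred_Inter: "finite \<T> \<Longrightarrow> \<T> \<noteq> {} \<Longrightarrow> \<forall>T\<in>\<T>. centred T \<Longrightarrow> centred (\<Inter>\<T>)"
  by (induction \<T> rule: finite_ne_induct) (auto intro: centred_Int)

lemma part_mem_centred:
  assumes "centred T" "D \<in> Parts" "D \<subseteq> msum T"
  shows "D \<in> T"
proof (rule ccontr)
  assume "D \<notin> T"
  then have "D \<subseteq> msum (Parts - T)"
    using part_subset_msum[of D "Parts - T"] assms(2) by auto
  then have "D \<subseteq> support_space (Parts - T)"
    using centred_compl_msum_subset_support_space[OF assms(1)] by blast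
  moreover have "D \<subseteq> support_space T"
    using assms(3) centred_msum_subset_support_space[OF assms(1)] by blast
  ultimately have "D \<subseteq> {0}"
    using support_space_Int_compl centred_subset[OF assms(1)] by blast
  moreover have "D \<noteq> {}"
    using lattice_polytopeD(4)[OF Parts_lattice_polytope[OF assms(2)]] .
  ultimately show False
    using Parts_nonzero[OF assms(2)] by blast
qed

section \<open>Centred sums are reflexive with induced nef-partitions\<close>

lemma affine_hull_msum: "T \<subseteq> Parts \<Longrightarrow> affine hull (msum T) = span (msum T)"
  using zero_in_msum by (intro affine_hull_span_0) (simp add: hull_inc)

lemma aff_dim_msum: "T \<subseteq> Parts \<Longrightarrow> aff_dim (msum T) = int (dim (msum T))"
  using zero_in_msum by (intro aff_dim_zero) (simp add: hull_inc)

lemma span_msum_subset_support_space: "centred T \<Longrightarrow> span (msum T) \<subseteq> support_space T"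
  using centred_msum_subset_support_space span_minimal subspace_support_space by blast

lemma finite_tight_normals: "finite (tight_normals T)"
  using finite_normals unfolding tight_normals_def by simp

lemma tight_normal: "e \<in> tight_normals T \<Longrightarrow> e \<in> normals"
  unfolding tight_normals_def by simp

lemma tight_normal_ge:
  assumes "T \<subseteq> Parts" "e \<in> tight_normals T" "x \<in> msum T"
  shows "inner x e \<ge> -1"
proof -
  have "min_inner (msum T) e = -1"
    using assms(2) unfolding tight_normals_def by blast
  then show ?thesis
    using min_inner_msum_le[OF assms(1,3), of e] by simp
qed

lemma mem_msum_iff_tight:
  assumes T: "centred T" and x: "x \<in> span (msum T)"
  shows "x \<in> msum T \<longleftrightarrow> (\<forall>e\<in>tight_normals T. inner x e \<ge> -1)"
proof
  have TP: "T \<subseteq> Parts"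
    using centred_subset[OF T] .
  show "x \<in> msum T \<Longrightarrow> \<forall>e\<in>tight_normals T. inner x e \<ge> -1"
    using tight_normal_ge[OF TP] by blast
  assume tight: "\<forall>e\<in>tight_normals T. inner x e \<ge> -1"
  show "x \<in> msum T"
  proof (rule mem_msumI[OF TP])
    fix e assume e: "e \<in> normals"
    show "inner x e \<ge> min_inner (msum T) e"
    proof (cases "e \<in> tight_normals T")
      case True
      then show ?thesis
        using tight unfolding tight_normals_def by auto
    next
      case False
      then have "inner x e = 0"
        using span_msum_subset_support_space[OF T] x e unfolding support_space_def by blast
      then show ?thesis
        using min_inner_msum_nonpos[OF TP e] by simp
    qed
  qed
qed

lemma tight_face:
  assumes "T \<subseteq> Parts" "e \<in> tight_normals T"
  shows "msum T \<inter> {x. e \<bullet> x = -1} face_of msum T"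
proof (rule face_of_Int_supporting_hyperplane_ge)
  show "convex (msum T)"
    using msum_convex[OF assms(1)] .
  fix x assume "x \<in> msum T"
  then show "e \<bullet> x \<ge> -1"
    using tight_normal_ge[OF assms, of x] by (simp add: inner_commute)
qed

lemma tight_hyperplane_disjoint_rel_interior:
  assumes "T \<subseteq> Parts" "e \<in> tight_normals T" "inner z e = -1"
  shows "z \<notin> rel_interior (msum T)"
proof -
  have "0 \<notin> {x. e \<bullet> x = -1}"
    by simp
  then have "msum T \<inter> {x. e \<bullet> x = -1} \<noteq> msum T"
    using zero_in_msum[OF assms(1)] by blast
  then have "msum T \<inter> {x. e \<bullet> x = -1} \<inter> rel_interior (msum T) = {}"
    using face_of_disjoint_rel_interior[OF tight_face[OF assms(1,2)]] by blast
  moreover have "z \<in> rel_interior (msum T) \<Longrightarrow> z \<in> msum T"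
    using rel_interior_subset by blast
  ultimately show ?thesis
    using assms(3) by (auto simp: inner_commute)
qed

lemma rel_interior_msumI:
  assumes T: "centred T" and z: "z \<in> msum T" and gt: "\<forall>e\<in>tight_normals T. inner z e > -1"
  shows "z \<in> rel_interior (msum T)"
proof -
  define U where "U = (\<Inter>e\<in>tight_normals T. {x. inner x e > -1})"
  have "open U"
    unfolding U_def by (rule open_INT[OF finite_tight_normals]) (simp add: open_halfspace_component_gt)
  moreover have "z \<in> U"
    unfolding U_def using gt by simp
  ultimately obtain r where r: "r > 0" "ball z r \<subseteq> U"
    using open_contains_ball by blast
  have "ball z r \<inter> affine hull (msum T) \<subseteq> msum T"
  proof
    fix y assume y: "y \<in> ball z r \<inter> affine hull (msum T)"
    then have "y \<in> span (msum T)"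
      using affine_hull_msum[OF centred_subset[OF T]] by simp
    moreover have "\<forall>e\<in>tight_normals T. inner y e \<ge> -1"
      using y r unfolding U_def by fastforce
    ultimately show "y \<in> msum T"
      using mem_msum_iff_tight[OF T] by blast
  qed
  then show ?thesis
    using mem_rel_interior_ball z r(1) by blast
qed

lemma facet_in_tight_hyperplane:
  assumes T: "centred T" and F: "F facet_of (msum T)"
  obtains e where "e \<in> tight_normals T" "F \<subseteq> {x. inner x e = -1}"
proof -
  have TP: "T \<subseteq> Parts"
    using centred_subset[OF T] .
  have F': "F face_of msum T" "F \<noteq> {}" "F \<noteq> msum T"
    using F by (auto simp: facet_of_def)
  obtain z where z: "z \<in> rel_interior F"
    using rel_interior_eq_empty face_of_imp_convex[OF F'(1)] F'(2) by blast
  have zF: "z \<in> F" and FQ: "F \<subseteq> msum T"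
    using z rel_interior_subset face_of_imp_subset[OF F'(1)] by blast+
  have "z \<notin> rel_interior (msum T)"
    using face_of_disjoint_rel_interior[OF F'(1,3)] zF by blast
  then obtain e where e: "e \<in> tight_normals T" "\<not> inner z e > -1"
    using rel_interior_msumI[OF T] FQ zF by blast
  then have "inner z e = -1"
    using tight_normal_ge[OF TP e(1)] FQ zF by force
  then have "z \<in> msum T \<inter> {x. e \<bullet> x = -1} \<inter> rel_interior F"
    using z zF FQ by (auto simp: inner_commute)
  then have "F \<subseteq> msum T \<inter> {x. e \<bullet> x = -1}"
    using subset_of_face_of[OF tight_face[OF TP e(1)] FQ] by blast
  then show ?thesis
    using that e(1) by (auto simp: inner_commute)
qed

lemma orth_proj_dual_lattice:
  assumes "e \<in> normals"
  shows "orth_proj S e \<in> dual_lattice (span S)"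
  unfolding dual_lattice_def
proof (intro CollectI conjI ballI impI)
  show "orth_proj S e \<in> span S"
    by (rule orth_proj_in_span)
  fix m assume "m \<in> span S" "lattice_point m"
  then show "inner m (orth_proj S e) \<in> \<int>"
    using inner_orth_proj[of m S e] normal_integral[OF assms] by simp
qed

text \<open>The projection keeps the values on msum T, and it is primitive because it takes the
  value -1 at a lattice point of F.\<close>
lemma orth_proj_tight_normal_facet_normal:
  assumes T: "centred T" and F: "F facet_of (msum T)"
    and e: "e \<in> tight_normals T" and Fe: "F \<subseteq> {x. inner x e = -1}"
  shows "orth_proj (msum T) e \<in> facet_normals (msum T)"
proof -
  have TP: "T \<subseteq> Parts"
    using centred_subset[OF T] .
  have FQ: "F \<subseteq> msum T"
    using F facet_of_def face_of_imp_subset by blast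
  have proj: "inner x (orth_proj (msum T) e) = inner x e" if "x \<in> msum T" for x
    using inner_orth_proj[OF span_base[OF that]] .
  obtain v where v: "v \<in> F" "lattice_point v"
    using lattice_polytope_face_lattice_point[OF msum_lattice_polytope[OF TP], of F] F
    by (auto simp: facet_of_def)
  have "v \<in> msum T"
    using v(1) FQ by blast
  then have "inner v (orth_proj (msum T) e) = inner v e"
    by (rule proj)
  also have "\<dots> = -1"
    using v(1) Fe by blast
  finally have "inner v (orth_proj (msum T) e) = -1" .
  then have "primitive_in (span (msum T)) (orth_proj (msum T) e)"
    using primitive_in_if_value_minus_one[OF orth_proj_dual_lattice[OF tight_normal[OF e]]]
      span_base[of v "msum T"] v FQ by blast
  moreover have "msum T \<subseteq> {x. -1 \<le> inner x (orth_proj (msum T) e)}"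
    using proj tight_normal_ge[OF TP e] by auto
  moreover have "F \<subseteq> {x. inner x (orth_proj (msum T) e) = -1}"
  proof
    fix x assume "x \<in> F"
    then have "x \<in> msum T" "inner x e = -1"
      using Fe FQ by blast+
    then show "x \<in> {x. inner x (orth_proj (msum T) e) = -1}"
      using proj[of x] by simp
  qed
  ultimately show ?thesis
    unfolding facet_normals_def using F by blast
qed

lemma facet_normal_multiple_of_orth_proj:
  assumes T: "centred T" and F: "F facet_of (msum T)"
    and e': "e' \<in> span (msum T)" and Fc: "F \<subseteq> {x. inner x e' = c}"
    and e: "e \<in> tight_normals T" and Fe: "F \<subseteq> {x. inner x e = -1}"
  shows "e' = (- c) *\<^sub>R orth_proj (msum T) e"
proof -
  let ?Q = "msum T"
  have FQ: "F \<subseteq> ?Q"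
    using F facet_of_def face_of_imp_subset by blast
  have "affine hull F \<subseteq> {x. e \<bullet> x = -1}"
    using Fe by (intro hull_minimal affine_hyperplane) (auto simp: inner_commute)
  then have "0 \<notin> affine hull F"
    by auto
  then have spF: "span F = span ?Q"
    using span_facet_eq_span[OF F zero_in_msum[OF centred_subset[OF T]]] by blast
  define w where "w = e' + c *\<^sub>R orth_proj ?Q e"
  have "F \<subseteq> {x. inner x w = 0}"
  proof
    fix x assume x: "x \<in> F"
    then have "inner x (orth_proj ?Q e) = inner x e"
      using FQ inner_orth_proj[OF span_base[of x ?Q]] by blast
    moreover have "inner x e = -1" "inner x e' = c"
      using x Fc Fe by blast+
    ultimately show "x \<in> {x. inner x w = 0}"
      unfolding w_def by (simp add: inner_add_right)
  qed
  moreover have "subspace {x. inner x w = 0}"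
    unfolding subspace_def by (auto simp: inner_add_left)
  ultimately have "span F \<subseteq> {x. inner x w = 0}"
    by (rule span_minimal)
  moreover have "w \<in> span ?Q"
    unfolding w_def using e' orth_proj_in_span by (intro span_add span_scale) auto
  ultimately have "w = 0"
    using spF by auto
  then show ?thesis
    unfolding w_def by (simp add: eq_neg_iff_add_eq_0)
qed

lemma facet_normal_msum_eq_orth_proj:
  assumes T: "centred T" and e': "e' \<in> facet_normals (msum T)"
  obtains e where "e \<in> tight_normals T" "e' = orth_proj (msum T) e"
proof -
  let ?Q = "msum T"
  have TP: "T \<subseteq> Parts"
    using centred_subset[OF T] .
  obtain F c where prim: "primitive_in (span ?Q) e'" and F: "F facet_of ?Q"
    and Qc: "?Q \<subseteq> {x. inner x e' \<ge> c}" and Fc: "F \<subseteq> {x. inner x e' = c}"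
    using e' unfolding facet_normals_def by blast
  obtain e where e: "e \<in> tight_normals T" and Fe: "F \<subseteq> {x. inner x e = -1}"
    using facet_in_tight_hyperplane[OF T F] by blast
  have e'_span: "e' \<in> span ?Q"
    using prim unfolding primitive_in_def dual_lattice_def by simp
  have e'_eq: "e' = (- c) *\<^sub>R orth_proj ?Q e"
    using facet_normal_multiple_of_orth_proj[OF T F e'_span Fc e Fe] .
  obtain v where v: "v \<in> F" "lattice_point v"
    using lattice_polytope_face_lattice_point[OF msum_lattice_polytope[OF TP], of F] F
    by (auto simp: facet_of_def)
  have "c = inner v e'"
    using v(1) Fc by blast
  moreover have "v \<in> span ?Q"
    using v(1) F span_base face_of_imp_subset unfolding facet_of_def by blast
  ultimately have "c \<in> \<int>"
    using dual_lattice_integral[OF _ _ v(2)] prim unfolding primitive_in_def by blast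
  then obtain n where n: "c = of_int n"
    by (elim Ints_cases)
  have "c \<le> 0"
    using Qc zero_in_msum[OF TP] by auto
  moreover have "c \<noteq> 0"
    using e'_eq prim unfolding primitive_in_def by auto
  ultimately have "- n > 0"
    using n by simp
  moreover have "primitive_in (span ?Q) (real_of_int (- n) *\<^sub>R orth_proj ?Q e)"
    using prim e'_eq n by simp
  ultimately have "- n = 1"
    using primitive_in_integer_multiple[OF _ orth_proj_dual_lattice[OF tight_normal[OF e]]] by blast
  then have "e' = orth_proj ?Q e"
    using e'_eq n by simp
  then show ?thesis
    using that e by blast
qed

lemma facet_normals_msum_ge:
  assumes T: "centred T" and x: "x \<in> msum T" and e': "e' \<in> facet_normals (msum T)"
  shows "inner x e' \<ge> -1"
proof -
  obtain e where e: "e \<in> tight_normals T" "e' = orth_proj (msum T) e"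
    using facet_normal_msum_eq_orth_proj[OF T e'] by blast
  then show ?thesis
    using tight_normal_ge[OF centred_subset[OF T] e(1) x] inner_orth_proj[OF span_base[OF x]] by simp
qed

lemma scaled_point_in_rel_frontier:
  assumes T: "centred T" and x: "x \<in> span (msum T)" "x \<notin> msum T"
  obtains s where "s > 1" "(1 / s) *\<^sub>R x \<in> rel_frontier (msum T)"
proof -
  obtain e1 where e1: "e1 \<in> tight_normals T" "inner x e1 < -1"
    using mem_msum_iff_tight[OF T x(1)] x(2) by force
  define s where "s = Max ((\<lambda>e. - inner x e) ` tight_normals T)"
  have fin: "finite ((\<lambda>e. - inner x e) ` tight_normals T)"
    using finite_tight_normals by simp
  have s_ge: "- inner x e \<le> s" if "e \<in> tight_normals T" for e
    unfolding s_def using fin that by (intro Max_ge) auto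
  have s: "s > 1"
    using s_ge[OF e1(1)] e1(2) by simp
  have "s \<in> (\<lambda>e. - inner x e) ` tight_normals T"
    unfolding s_def using fin e1(1) by (intro Max_in) auto
  then obtain e0 where e0: "e0 \<in> tight_normals T" "inner x e0 = - s"
    by auto
  define y where "y = (1 / s) *\<^sub>R x"
  have y_inner: "inner y e = inner x e / s" for e
    unfolding y_def by simp
  have "\<forall>e\<in>tight_normals T. inner y e \<ge> -1"
  proof
    fix e assume "e \<in> tight_normals T"
    then have "- inner x e \<le> s"
      by (rule s_ge)
    then show "inner y e \<ge> -1"
      unfolding y_inner using s by (simp add: field_simps)
  qed
  moreover have "y \<in> span (msum T)"
    unfolding y_def using x(1) by (rule span_scale)
  ultimately have "y \<in> msum T"
    using mem_msum_iff_tight[OF T] by blast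
  moreover have "y \<notin> rel_interior (msum T)"
    using e0 s tight_hyperplane_disjoint_rel_interior[OF centred_subset[OF T], of e0 y]
    unfolding y_inner by simp
  ultimately have "y \<in> rel_frontier (msum T)"
    unfolding rel_frontier_def using closure_subset by blast
  with s that show ?thesis
    unfolding y_def by blast
qed

text \<open>If x lies outside msum T, shrinking it until it meets the relative boundary lands on a
  facet whose normal x violates.\<close>
lemma mem_msum_if_facet_normals_ge:
  assumes T: "centred T" and x: "x \<in> span (msum T)"
    and ge: "\<forall>e'\<in>facet_normals (msum T). inner x e' \<ge> -1"
  shows "x \<in> msum T"
proof (rule ccontr)
  assume "x \<notin> msum T"
  then obtain s where s: "s > 1" and y: "(1 / s) *\<^sub>R x \<in> rel_frontier (msum T)"
    using scaled_point_in_rel_frontier[OF T x] by blast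
  have "polyhedron (msum T)"
    using polytope_imp_polyhedron lattice_polytopeD(1)[OF msum_lattice_polytope[OF centred_subset[OF T]]]
    by blast
  then obtain F where F: "F facet_of msum T" "(1 / s) *\<^sub>R x \<in> F"
    using rel_frontier_of_polyhedron y by blast
  obtain e where e: "e \<in> tight_normals T" "F \<subseteq> {x. inner x e = -1}"
    using facet_in_tight_hyperplane[OF T F(1)] by blast
  have "inner ((1 / s) *\<^sub>R x) e = -1"
    using e(2) F(2) by blast
  then have "inner x e = - s"
    using s by (simp add: field_simps)
  moreover have "inner x (orth_proj (msum T) e) \<ge> -1"
    using ge orth_proj_tight_normal_facet_normal[OF T F(1) e] by blast
  ultimately show False
    using inner_orth_proj[OF x] s by simp
qed

lemma reflexive_msum:
  assumes T: "centred T"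
  shows "reflexive (msum T)"
proof -
  have "msum T = {x \<in> span (msum T). \<forall>e'\<in>facet_normals (msum T). inner x e' \<ge> -1}"
    using facet_normals_msum_ge[OF T] mem_msum_if_facet_normals_ge[OF T] span_base by blast
  then show ?thesis
    unfolding reflexive_def using msum_lattice_polytope[OF centred_subset[OF T]] by blast
qed

lemma parts_in_msum:
  assumes "centred T"
  shows "parts_in Parts (msum T) = T"
  unfolding parts_in_def
  using part_mem_centred[OF assms] part_subset_msum[of _ T] centred_subset[OF assms] by blast

lemma nef_partition_msum:
  assumes T: "centred T" and "T \<noteq> {}"
  shows "nef_partition (msum T) T"
proof -
  have TP: "T \<subseteq> Parts"
    using centred_subset[OF T] .
  have "- (INF x\<in>D. inner x e') \<in> {0, 1}" if D: "D \<in> T" and e': "e' \<in> facet_normals (msum T)" for D e'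
  proof -
    obtain e where e: "e \<in> tight_normals T" "e' = orth_proj (msum T) e"
      using facet_normal_msum_eq_orth_proj[OF T e'] by blast
    have "inner x e' = inner x e" if "x \<in> D" for x
      using inner_orth_proj[OF span_base] part_subset_msum[OF D TP] that e(2) by blast
    then have "(INF x\<in>D. inner x e') = min_inner D e"
      unfolding min_inner_def by (intro INF_cong) auto
    moreover have "D \<in> Parts"
      using D TP by blast
    ultimately show ?thesis
      using min_inner_part[of D e] tight_normal[OF e(1)] by auto
  qed
  moreover have "finite T"
    using TP Parts_finite finite_subset by blast
  ultimately show ?thesis
    unfolding nef_partition_def using assms(2) TP Parts_lattice_polytope Parts_nonzero by blast
qed

section \<open>Atoms and the irreducible decomposition\<close>

lemma inj_on_msum_centred: "inj_on msum (Collect centred)"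
proof (rule inj_onI)
  fix T U assume T: "T \<in> Collect centred" and U: "U \<in> Collect centred" and eq: "msum T = msum U"
  have "T = parts_in Parts (msum T)"
    using parts_in_msum T by simp
  also have "\<dots> = parts_in Parts (msum U)"
    using eq by simp
  also have "\<dots> = U"
    using parts_in_msum U by simp
  finally show "T = U" .
qed

definition atom :: "(real^'d) set \<Rightarrow> (real^'d) set set" where
  "atom D = \<Inter>{T. centred T \<and> D \<in> T}"

lemma
  assumes "D \<in> Parts"
  shows atom_centred: "centred (atom D)"
    and mem_atom: "D \<in> atom D"
proof -
  have "{T. centred T \<and> D \<in> T} \<subseteq> Pow Parts"
    using centred_subset by blast
  then have "finite {T. centred T \<and> D \<in> T}"
    by (rule finite_subset) (simp add: Parts_finite)
  moreover have "Parts \<in> {T. centred T \<and> D \<in> T}"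
    using centred_Parts assms by blast
  ultimately show "centred (atom D)"
    unfolding atom_def by (intro centred_Inter) auto
  show "D \<in> atom D"
    unfolding atom_def by blast
qed

lemma atom_least: "centred U \<Longrightarrow> D \<in> U \<Longrightarrow> atom D \<subseteq> U"
  unfolding atom_def by blast

lemma atom_eq:
  assumes D: "D \<in> Parts" and D': "D' \<in> Parts" and DD': "D \<in> atom D'"
  shows "atom D = atom D'"
proof
  show "atom D \<subseteq> atom D'"
    using atom_least[OF atom_centred[OF D'] DD'] .
  show "atom D' \<subseteq> atom D"
  proof (cases "D' \<in> atom D")
    case True
    then show ?thesis
      using atom_least[OF atom_centred[OF D]] by blast
  next
    case False
    then have "atom D' \<subseteq> atom D' - atom D"
      using atom_least centred_Diff atom_centred D D' mem_atom by blast
    then show ?thesis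
      using DD' mem_atom[OF D] by blast
  qed
qed

lemma atom_irreducible:
  assumes D: "D \<in> Parts"
  shows "irreducible_nef (atom D)"
  unfolding irreducible_nef_def
proof
  assume "reducible (atom D)"
  then obtain T where T: "T \<subseteq> atom D" "T \<noteq> {}" "T \<noteq> atom D" "0 \<in> rel_interior (msum T)"
    unfolding reducible_def by blast
  then obtain D1 where D1: "D1 \<in> T"
    by blast
  have "centred T"
    using T(1,4) centred_subset[OF atom_centred[OF D]] unfolding centred_def by blast
  moreover have "D1 \<in> Parts"
    using D1 T(1) centred_subset[OF atom_centred[OF D]] by blast
  ultimately have "atom D1 \<subseteq> T" "atom D1 = atom D"
    using atom_least[of T D1] D1 atom_eq[of D1 D] D T(1) by blast+
  then show False
    using T(1,3) by blast
qed

definition atoms :: "(real^'d) set set set" where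
  "atoms = atom ` Parts"

lemma atom_subset_Parts: "D \<in> Parts \<Longrightarrow> atom D \<subseteq> Parts"
  using atom_centred centred_subset by blast

lemma finite_atoms: "finite atoms"
  unfolding atoms_def using Parts_finite by simp

lemma Union_atoms: "\<Union>atoms = Parts"
proof
  show "\<Union>atoms \<subseteq> Parts"
    unfolding atoms_def using atom_subset_Parts by blast
  show "Parts \<subseteq> \<Union>atoms"
    unfolding atoms_def using mem_atom by blast
qed

lemma atoms_centred: "A \<in> atoms \<Longrightarrow> centred A"
  unfolding atoms_def using atom_centred by blast

lemma atoms_eq_atom:
  assumes "A \<in> atoms" "D \<in> A"
  shows "A = atom D"
proof -
  obtain D' where D': "D' \<in> Parts" "A = atom D'"
    using assms(1) unfolding atoms_def by blast
  then have "D \<in> Parts"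
    using assms(2) atom_subset_Parts by blast
  then have "atom D = atom D'"
    using atom_eq[of D D'] D' assms(2) by blast
  with D'(2) show ?thesis
    by simp
qed

lemma disjoint_atoms: "disjoint atoms"
  unfolding pairwise_def disjnt_def using atoms_eq_atom by blast

lemma dim_msum_Un:
  assumes T: "centred T" and U: "centred U" and disj: "T \<inter> U = {}"
  shows "dim (msum (T \<union> U)) = dim (msum T) + dim (msum U)"
proof -
  have TP: "T \<subseteq> Parts" and UP: "U \<subseteq> Parts"
    using T U centred_subset by auto
  let ?A = "span (msum T)" and ?B = "span (msum U)"
  have "msum (T \<union> U) = msum T + msum ((T \<union> U) - T)"
    using msum_split[of T "T \<union> U"] TP UP by blast
  also have "(T \<union> U) - T = U"
    using disj by blast
  finally have "dim (msum (T \<union> U)) = dim (span (msum T + msum U))"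
    by simp
  also have "\<dots> = dim (span (msum T \<union> msum U))"
    using span_set_plus_eq_span_Un[OF zero_in_msum[OF TP] zero_in_msum[OF UP]] by simp
  also have "\<dots> = dim {x + y |x y. x \<in> ?A \<and> y \<in> ?B}"
    by (simp add: span_Un)
  finally have sum: "dim (msum (T \<union> U)) = dim {x + y |x y. x \<in> ?A \<and> y \<in> ?B}" .
  have "?A \<inter> ?B \<subseteq> {0}"
  proof
    fix x assume x: "x \<in> ?A \<inter> ?B"
    have "?B \<subseteq> span (msum (Parts - T))"
      using msum_mono[of U "Parts - T"] UP disj by (intro span_mono) blast
    then have "x \<in> support_space (Parts - T)"
      using x span_msum_subset_support_space[OF centred_compl[OF T]] by blast
    moreover have "x \<in> support_space T"
      using x span_msum_subset_support_space[OF T] by blast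
    ultimately show "x \<in> {0}"
      using support_space_Int_compl[OF TP] by blast
  qed
  then have "dim (?A \<inter> ?B) = 0"
    by simp
  moreover have "dim {x + y |x y. x \<in> ?A \<and> y \<in> ?B} + dim (?A \<inter> ?B) = dim ?A + dim ?B"
    by (rule dim_sums_Int) simp_all
  ultimately show ?thesis
    using sum dim_span[of "msum T"] dim_span[of "msum U"] by linarith
qed

lemma centred_Union_disjoint:
  "finite \<A> \<Longrightarrow> \<forall>A\<in>\<A>. centred A \<Longrightarrow> disjoint \<A> \<Longrightarrow>
    centred (\<Union>\<A>) \<and> dim (msum (\<Union>\<A>)) = (\<Sum>A\<in>\<A>. dim (msum A))"
proof (induction \<A> rule: finite_induct)
  case empty
  then show ?case
    using centred_empty by (simp add: msum_def)
next
  case (insert X \<A>)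
  have X: "centred X" and centred: "\<forall>A\<in>\<A>. centred A"
    using insert.prems(1) by auto
  have "disjoint \<A>"
    using pairwise_subset[OF insert.prems(2)] by blast
  with centred have IH: "centred (\<Union>\<A>)" "dim (msum (\<Union>\<A>)) = (\<Sum>A\<in>\<A>. dim (msum A))"
    using insert.IH by blast+
  have "X \<inter> A = {}" if "A \<in> \<A>" for A
    using insert.prems(2) insert.hyps(2) that unfolding pairwise_def disjnt_def by auto
  then have "X \<inter> \<Union>\<A> = {}"
    by blast
  then have "dim (msum (X \<union> \<Union>\<A>)) = dim (msum X) + (\<Sum>A\<in>\<A>. dim (msum A))"
    using dim_msum_Un[OF X IH(1)] IH(2) by simp
  then show ?case
    unfolding Union_insert sum.insert[OF insert.hyps] using centred_Un[OF X IH(1)] by blast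
qed

lemma msum_image_msum:
  assumes "\<A> \<subseteq> atoms"
  shows "msum (msum ` \<A>) = msum (\<Union>\<A>)"
    and "(\<Sum>Q\<in>msum ` \<A>. aff_dim Q) = (\<Sum>A\<in>\<A>. aff_dim (msum A))"
proof -
  have centred: "\<forall>A\<in>\<A>. centred A"
    using assms atoms_centred by blast
  then have inj: "inj_on msum \<A>"
    using inj_on_subset[OF inj_on_msum_centred] by blast
  have "finite \<A>"
    using assms finite_atoms finite_subset by blast
  moreover have "\<forall>A\<in>\<A>. finite A"
    using centred centred_subset Parts_finite finite_subset by blast
  moreover have "disjoint \<A>"
    using pairwise_subset[OF disjoint_atoms assms] .
  ultimately have "msum (\<Union>\<A>) = (\<Sum>A\<in>\<A>. msum A)"
    by (rule msum_Union_disjoint)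
  also have "\<dots> = msum (msum ` \<A>)"
    unfolding msum_def[of "msum ` \<A>"] using sum.reindex[OF inj, of "\<lambda>P. P"] by simp
  finally show "msum (msum ` \<A>) = msum (\<Union>\<A>)"
    by simp
  show "(\<Sum>Q\<in>msum ` \<A>. aff_dim Q) = (\<Sum>A\<in>\<A>. aff_dim (msum A))"
    using sum.reindex[OF inj, of aff_dim] by simp
qed

lemma msum_atom_summand:
  assumes "Q \<in> msum ` atoms"
  shows "lattice_polytope Q \<and> Q \<subseteq> Delta \<and> 0 \<in> rel_interior Q \<and> reflexive Q
    \<and> nef_partition Q (parts_in Parts Q) \<and> irreducible_nef (parts_in Parts Q)"
proof -
  obtain D where D: "D \<in> Parts" and Q: "Q = msum (atom D)"
    using assms unfolding atoms_def by blast
  have A: "centred (atom D)" "atom D \<noteq> {}"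
    using atom_centred[OF D] mem_atom[OF D] by blast+
  then have "atom D \<subseteq> Parts" "0 \<in> rel_interior Q"
    using centred_subset unfolding Q centred_def by blast+
  moreover have "parts_in Parts Q = atom D"
    unfolding Q by (rule parts_in_msum[OF A(1)])
  ultimately show ?thesis
    using msum_lattice_polytope msum_subset_Delta reflexive_msum[OF A(1)]
      nef_partition_msum[OF A] atom_irreducible[OF D]
    unfolding Q by simp
qed

lemma aff_dim_sum_atoms: "(\<Sum>Q\<in>msum ` atoms. aff_dim Q) = int CARD('d)"
proof -
  have centred: "\<forall>A\<in>atoms. centred A"
    using atoms_centred by blast
  have "(\<Sum>Q\<in>msum ` atoms. aff_dim Q) = (\<Sum>A\<in>atoms. aff_dim (msum A))"
    using msum_image_msum(2)[OF order_refl] .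
  also have "\<dots> = (\<Sum>A\<in>atoms. int (dim (msum A)))"
    using centred centred_subset aff_dim_msum by (intro sum.cong) auto
  also have "\<dots> = int (dim (msum Parts))"
    using centred_Union_disjoint[OF finite_atoms centred disjoint_atoms] Union_atoms by simp
  also have "\<dots> = int CARD('d)"
    using aff_dim_msum[of Parts] Delta_eq_msum Delta_full_dim by simp
  finally show ?thesis .
qed

lemma irreducible_decomposition_atoms: "irreducible_decomposition Delta Parts (msum ` atoms)"
proof -
  have "Delta = msum (msum ` atoms)"
    using msum_image_msum(1)[OF order_refl] Union_atoms Delta_eq_msum by simp
  moreover have "finite (msum ` atoms)"
    using finite_atoms by blast
  moreover have "msum ` atoms \<noteq> {}"
    using Union_atoms Parts_nonempty by auto
  ultimately show ?thesis
    unfolding irreducible_decomposition_def direct_sum_split_def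
    using msum_atom_summand aff_dim_sum_atoms by simp
qed

lemma irreducible_summand_mem_atoms:
  assumes "0 \<in> rel_interior Q" "nef_partition Q (parts_in Parts Q)"
    and "irreducible_nef (parts_in Parts Q)"
  shows "parts_in Parts Q \<in> atoms" "Q = msum (parts_in Parts Q)"
proof -
  let ?T = "parts_in Parts Q"
  show Q: "Q = msum ?T"
    using assms(2) unfolding nef_partition_def by blast
  have "?T \<noteq> {}"
    using assms(2) unfolding nef_partition_def by blast
  then obtain D where D: "D \<in> ?T"
    by blast
  have DP: "D \<in> Parts"
    using D unfolding parts_in_def by blast
  have "0 \<in> rel_interior (msum ?T)"
    using assms(1) by (subst Q[symmetric])
  then have T: "centred ?T"
    unfolding centred_def parts_in_def by blast
  have "?T = atom D"
  proof (rule ccontr)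
    assume "?T \<noteq> atom D"
    moreover have "atom D \<subseteq> ?T"
      using atom_least[OF T D] .
    moreover have "atom D \<noteq> {}" "0 \<in> rel_interior (msum (atom D))"
      using mem_atom[OF DP] atom_centred[OF DP] unfolding centred_def by blast+
    ultimately have "reducible ?T"
      unfolding reducible_def by blast
    then show False
      using assms(3) unfolding irreducible_nef_def by blast
  qed
  then show "?T \<in> atoms"
    unfolding atoms_def using DP by blast
qed

lemma irreducible_decomposition_unique:
  assumes "irreducible_decomposition Delta Parts S"
  shows "S = msum ` atoms"
proof -
  have S: "finite S" "Delta = msum S"
    and summands: "\<And>Q. Q \<in> S \<Longrightarrow> 0 \<in> rel_interior Q \<and> nef_partition Q (parts_in Parts Q)
      \<and> irreducible_nef (parts_in Parts Q)"
    using assms unfolding irreducible_decomposition_def direct_sum_split_def by auto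
  define \<A> where "\<A> = parts_in Parts ` S"
  have \<A>: "\<A> \<subseteq> atoms"
    unfolding \<A>_def using irreducible_summand_mem_atoms(1) summands by blast
  have S_eq: "S = msum ` \<A>"
    unfolding \<A>_def image_image using irreducible_summand_mem_atoms(2) summands by auto
  have "centred (\<Union>\<A>)"
    using centred_Union_disjoint[of \<A>] \<A> atoms_centred pairwise_subset[OF disjoint_atoms \<A>]
      S(1) \<A>_def by blast
  have "atoms \<subseteq> \<A>"
  proof
    fix A assume "A \<in> atoms"
    then obtain D where D: "D \<in> Parts" "A = atom D"
      unfolding atoms_def by blast
    have "D \<subseteq> msum (\<Union>\<A>)"
      using part_subset_msum[OF D(1) order_refl] Delta_eq_msum S(2) S_eq msum_image_msum(1)[OF \<A>]
      by simp
    then have "D \<in> \<Union>\<A>"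
      using part_mem_centred[OF \<open>centred (\<Union>\<A>)\<close> D(1)] by blast
    then obtain A' where "A' \<in> \<A>" "D \<in> A'"
      by blast
    then show "A \<in> \<A>"
      using atoms_eq_atom[of A' D] \<A> D(2) by blast
  qed
  then show ?thesis
    using S_eq \<A> by blast
qed

end

theorem mainTheorem6:
  fixes Delta :: "(real^'d) set" and Parts :: "(real^'d) set set"
  assumes "aff_dim Delta = int CARD('d)"
    and "reflexive Delta"
    and "nef_partition Delta Parts"
  shows "\<exists>!S. irreducible_decomposition Delta Parts S"
proof -
  interpret reflexive_nef_partition Delta Parts
    using assms by unfold_locales
  show ?thesis
    using irreducible_decomposition_atoms irreducible_decomposition_unique by blast
qed

end
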